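(* Let $(S,\mu)$ be a $\sigma$-finite measure space. Every semiuniformly integrable set of nonnegative graphons in $L^1(S\times S,\mu\times\mu)$ is relatively complete for the cut norm, i.e. every $\|\cdot\|_\square$-Cauchy sequence in the set converges in $\|\cdot\|_\square$ to some graphon on $(S,\mu)$.
   Context: A graphon on $(S,\mu)$ is a symmetric function $W\in L^1(S\times S,\mu\times\mu)$; functions equal a.e. are identified. Cut norm: $\|F\|_\square:=\sup_{T,U}|\int_{T\times U}F\,d\mu\,d\mu|$ over measurable $T,U\subseteq S$. A set $\mathcal A$ of integrable functions is semiuniformly integrable if $\sup_{F\in\mathcal A}\int_{|F|>B}|F|\to0$ as $B\to\infty$. *)

theory Defs
  imports "HOL-Analysis.Analysis"
begin

text \<open>A graphon on (S,mu): a symmetric (a.e.) integrable real function on S x S.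
  Functions are not quotiented; the cut norm below is insensitive to a.e. changes.\<close>
definition graphon :: "'a measure \<Rightarrow> ('a \<times> 'a \<Rightarrow> real) \<Rightarrow> bool" where
  "graphon M W \<longleftrightarrow> integrable (M \<Otimes>\<^sub>M M) W \<and>
     (AE z in M \<Otimes>\<^sub>M M. W z = W (snd z, fst z))"

definition cut_norm :: "'a measure \<Rightarrow> ('a \<times> 'a \<Rightarrow> real) \<Rightarrow> real" where
  "cut_norm M F = (SUP TU \<in> sets M \<times> sets M.
      \<bar>LINT z : fst TU \<times> snd TU | M \<Otimes>\<^sub>M M. F z\<bar>)"

definition semiuniformly_integrable :: "'a measure \<Rightarrow> ('a \<Rightarrow> real) set \<Rightarrow> bool" where
  "semiuniformly_integrable N A \<longleftrightarrow>
     (\<forall>e>0. \<exists>B0. \<forall>B\<ge>B0. \<forall>F\<in>A.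
        (LINT z : {z \<in> space N. \<bar>F z\<bar> > B} | N. \<bar>F z\<bar>) \<le> e)"

definition cut_cauchy :: "'a measure \<Rightarrow> (nat \<Rightarrow> 'a \<times> 'a \<Rightarrow> real) \<Rightarrow> bool" where
  "cut_cauchy M W \<longleftrightarrow>
     (\<forall>e>0. \<exists>N. \<forall>m\<ge>N. \<forall>n\<ge>N. cut_norm M (\<lambda>z. W m z - W n z) < e)"

end

theory Submission
  imports Defs
begin

text \<open>For a cut-norm Cauchy sequence \<open>W n\<close> the integrals of \<open>W n\<close> over rectangles converge,
  uniformly in the rectangle. Semiuniform integrability and \<open>\<sigma>\<close>-finiteness make the set functions
  \<open>E \<mapsto> \<integral>\<^sub>E W n\<close> uniformly tight and uniformly absolutely continuous, hence uniformly countably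
  additive; so the sets \<open>E\<close> on which \<open>\<integral>\<^sub>E W n\<close> converges form a Dynkin system containing the
  rectangles, i.e. all measurable sets. The limit is a finite measure absolutely continuous with respect
  to \<open>\<mu> \<times> \<mu>\<close>; its Radon-Nikodym density, symmetrised, is the limit graphon, and the uniform Cauchy
  property on rectangles turns convergence on each rectangle into convergence in cut norm.\<close>

section \<open>Setwise limits of uniformly integrable densities\<close>

lemma convergent_uniform_limit:
  fixes b :: "nat \<Rightarrow> nat \<Rightarrow> 'a::complete_space"
  assumes ul: "uniform_limit UNIV b a sequentially" and conv: "\<And>k. convergent (b k)"
  shows "convergent a" and "(\<lambda>k. lim (b k)) \<longlonglongrightarrow> lim a"
proof -
  show conv_a: "convergent a"
  proof (rule Cauchy_convergent, rule metric_CauchyI)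
    fix e :: real assume e: "e > 0"
    obtain k where k: "\<forall>n. dist (b k n) (a n) < e/3"
      using ul e unfolding uniform_limit_sequentially_iff
      by (metis UNIV_I divide_pos_pos le_refl zero_less_numeral)
    obtain N where N: "\<forall>m\<ge>N. \<forall>n\<ge>N. dist (b k m) (b k n) < e/3"
      using convergent_Cauchy[OF conv[of k]] e by (meson divide_pos_pos metric_CauchyD zero_less_numeral)
    have "dist (a m) (a n) < e" if "m \<ge> N" "n \<ge> N" for m n
    proof -
      have "dist (a m) (a n) \<le> dist (b k m) (a m) + dist (b k m) (b k n) + dist (b k n) (a n)"
        using dist_triangle[of "a m" "a n" "b k m"] dist_triangle[of "b k m" "a n" "b k n"]
        by (simp add: dist_commute)
      moreover have "dist (b k m) (a m) < e/3" "dist (b k n) (a n) < e/3" "dist (b k m) (b k n) < e/3"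
        using k N that by auto
      ultimately show ?thesis by linarith
    qed
    then show "\<exists>N. \<forall>m\<ge>N. \<forall>n\<ge>N. dist (a m) (a n) < e" by blast
  qed
  show "(\<lambda>k. lim (b k)) \<longlonglongrightarrow> lim a"
  proof (rule metric_LIMSEQ_I)
    fix e :: real assume e: "e > 0"
    obtain k0 where k0: "\<forall>k\<ge>k0. \<forall>n. dist (b k n) (a n) < e/2"
      using ul e unfolding uniform_limit_sequentially_iff by (meson half_gt_zero UNIV_I)
    have "dist (lim (b k)) (lim a) < e" if "k \<ge> k0" for k
    proof -
      have "(\<lambda>n. dist (b k n) (a n)) \<longlonglongrightarrow> dist (lim (b k)) (lim a)"
        using conv_a conv[of k] by (intro tendsto_dist) (auto simp: convergent_LIMSEQ_iff)
      then have "dist (lim (b k)) (lim a) \<le> e/2"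
        by (rule LIMSEQ_le_const2) (use k0 that in \<open>auto intro: less_imp_le\<close>)
      then show ?thesis using e by linarith
    qed
    then show "\<exists>k0. \<forall>k\<ge>k0. dist (lim (b k)) (lim a) < e" by blast
  qed
qed

lemma (in sigma_finite_measure) real_Radon_Nikodym:
  assumes "finite_measure L" "absolutely_continuous M L" "sets L = sets M"
  obtains g where "integrable M g" "\<And>x. 0 \<le> g x" "\<And>E. E \<in> sets M \<Longrightarrow> (LINT x:E|M. g x) = measure L E"
proof -
  interpret L: finite_measure L by fact
  obtain g where g[measurable]: "g \<in> borel_measurable M"
    and RN_g: "AE x in M. RN_deriv M L x = ennreal (g x)" and g_nonneg: "\<And>x. 0 \<le> g x"
    using real_RN_deriv assms by metis
  have "density M g = L"
    using density_RN_deriv[OF assms(2,3)] density_cong[OF _ _ RN_g] by simp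
  then have emeasure_L: "emeasure L E = (\<integral>\<^sup>+x. ennreal (indicator E x * g x) \<partial>M)" if "E \<in> sets M" for E
    using emeasure_density[OF _ that, of g] by (auto intro!: nn_integral_cong split: split_indicator)
  have "(\<integral>\<^sup>+x. ennreal (g x) \<partial>M) = emeasure L (space M)"
    using emeasure_L[of "space M"] by (auto intro!: nn_integral_cong)
  then have "integrable M g"
    by (intro integrableI_nonneg) (auto simp: g_nonneg less_top[symmetric])
  moreover have "(LINT x:E|M. g x) = measure L E" if "E \<in> sets M" for E
    unfolding set_lebesgue_integral_def measure_def
    using emeasure_L[OF that] that by (simp add: integral_eq_nn_integral g_nonneg)
  ultimately show ?thesis using g_nonneg that by blast
qed

locale uniformly_cauchy_densities =
  fixes N :: "'a measure" and G :: "'a set set" and K :: "nat \<Rightarrow> 'a set"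
    and f :: "nat \<Rightarrow> 'a \<Rightarrow> real"
  assumes Int_stable_G: "Int_stable G" and G_subset: "G \<subseteq> Pow (space N)"
    and sets_eq: "sets N = sigma_sets (space N) G" and space_in_G: "space N \<in> G"
    and K_in_G: "\<And>j. K j \<in> G" and incseq_K: "incseq K" and UN_K: "(\<Union>j. K j) = space N"
    and finite_K: "\<And>j. emeasure N (K j) \<noteq> \<infinity>"
    and integrable_f: "\<And>n. integrable N (f n)"
    and nonneg_f: "\<And>n. AE x in N. 0 \<le> f n x"
    and semiuniformly_integrable_f: "semiuniformly_integrable N (range f)"
    and uniformly_Cauchy: "uniformly_Cauchy_on G (\<lambda>n E. LINT x:E|N. f n x)"
begin

definition mu :: "nat \<Rightarrow> 'a set \<Rightarrow> real" where
  "mu n E = (\<integral>x. indicator E x * f n x \<partial>N)"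

lemma G_sets: "G \<subseteq> sets N"
  using sets_eq by auto

lemma K_sets: "K j \<in> sets N"
  using K_in_G G_sets by auto

lemma f_measurable[measurable]: "f n \<in> borel_measurable N"
  using integrable_f by auto

lemma integrable_indicator_f: "E \<in> sets N \<Longrightarrow> integrable N (\<lambda>x. indicator E x * f n x)"
  using integrable_mult_indicator[of E N "f n"] integrable_f by simp

lemma mu_uniformly_Cauchy: "uniformly_Cauchy_on G mu"
  using uniformly_Cauchy by (simp add: mu_def[abs_def] set_lebesgue_integral_def)

lemma mu_uniformly_CauchyD:
  assumes "e > 0" obtains n0 where "\<And>m n E. m \<ge> n0 \<Longrightarrow> n \<ge> n0 \<Longrightarrow> E \<in> G \<Longrightarrow> \<bar>mu m E - mu n E\<bar> < e"
  using mu_uniformly_Cauchy assms unfolding uniformly_Cauchy_on_def dist_real_def by metis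

lemma mu_empty[simp]: "mu n {} = 0"
  by (simp add: mu_def)

lemma mu_nonneg: "E \<in> sets N \<Longrightarrow> 0 \<le> mu n E"
  unfolding mu_def using nonneg_f[of n] by (auto intro!: integral_nonneg_AE split: split_indicator)

lemma mu_Un:
  assumes "E \<in> sets N" "F \<in> sets N" "E \<inter> F = {}"
  shows "mu n (E \<union> F) = mu n E + mu n F"
proof -
  have "(\<lambda>x. indicator (E \<union> F) x * f n x) = (\<lambda>x. indicator E x * f n x + indicator F x * f n x)"
    using assms(3) by (auto simp: indicator_def fun_eq_iff)
  then show ?thesis unfolding mu_def using integrable_indicator_f assms by simp
qed

lemma mu_Diff:
  assumes "E \<in> sets N" "F \<in> sets N" "F \<subseteq> E"
  shows "mu n (E - F) = mu n E - mu n F"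
proof -
  have "mu n ((E - F) \<union> F) = mu n (E - F) + mu n F"
    using assms by (intro mu_Un) auto
  moreover have "(E - F) \<union> F = E" using assms(3) by auto
  ultimately show ?thesis by simp
qed

lemma mu_mono:
  assumes "E \<in> sets N" "F \<in> sets N" "E \<subseteq> F"
  shows "mu n E \<le> mu n F"
  using mu_Diff[of F E n] mu_nonneg[of "F - E" n] assms by auto

lemma mu_null: "E \<in> null_sets N \<Longrightarrow> mu n E = 0"
  unfolding mu_def by (rule integral_eq_zero_AE) (use AE_not_in in \<open>force elim: AE_mp\<close>)

lemma tendsto_mu_Diff_K: "(\<lambda>j. mu n (space N - K j)) \<longlonglongrightarrow> 0"
proof -
  have "(\<lambda>j. \<integral>x. indicator (space N - K j) x * f n x \<partial>N) \<longlonglongrightarrow> (\<integral>x. 0 \<partial>N)"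
  proof (rule integral_dominated_convergence[where w="\<lambda>x. \<bar>f n x\<bar>"])
    show "AE x in N. (\<lambda>j. indicator (space N - K j) x * f n x) \<longlonglongrightarrow> 0"
    proof (rule AE_I2)
      fix x assume "x \<in> space N"
      then obtain j0 where "x \<in> K j0" using UN_K by auto
      then have "\<forall>j\<ge>j0. x \<in> K j"
        using incseq_K unfolding incseq_def by blast
      then have "\<forall>j\<ge>j0. indicator (space N - K j) x * f n x = 0"
        by simp
      then show "(\<lambda>j. indicator (space N - K j) x * f n x) \<longlonglongrightarrow> 0"
        by (intro tendsto_eventually) (auto simp: eventually_sequentially)
    qed
  qed (use integrable_f K_sets in \<open>auto simp: indicator_def\<close>)
  then show ?thesis by (simp add: mu_def)
qed

lemma mu_uniformly_tight:
  assumes e: "e > 0" obtains j where "\<And>n. mu n (space N - K j) \<le> e"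
proof -
  obtain n0 where n0: "\<And>m n E. m \<ge> n0 \<Longrightarrow> n \<ge> n0 \<Longrightarrow> E \<in> G \<Longrightarrow> \<bar>mu m E - mu n E\<bar> < e/4"
    using mu_uniformly_CauchyD[of "e/4"] e by auto
  have "\<forall>\<^sub>F j in sequentially. \<forall>k\<in>{..n0}. mu k (space N - K j) < e/4"
    using e by (intro eventually_ball_finite ballI order_tendstoD(2)[OF tendsto_mu_Diff_K]) auto
  then obtain j where j: "\<And>k. k \<le> n0 \<Longrightarrow> mu k (space N - K j) < e/4"
    unfolding eventually_sequentially by auto
  have "mu n (space N - K j) \<le> e" for n
  proof (cases "n \<le> n0")
    case True then show ?thesis using j e by force
  next
    case False
    \<comment> \<open>\<open>space N\<close> and \<open>K j\<close> lie in \<open>G\<close>, so \<open>mu n\<close> and \<open>mu n0\<close> nearly agree on both.\<close>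
    have "mu k (space N - K j) = mu k (space N) - mu k (K j)" for k
      using mu_Diff K_sets sets.sets_into_space by blast
    note this[of n] this[of n0]
    moreover have "\<bar>mu n (space N) - mu n0 (space N)\<bar> < e/4" "\<bar>mu n (K j) - mu n0 (K j)\<bar> < e/4"
      using n0 False space_in_G K_in_G by auto
    ultimately show ?thesis using j[of n0] e by linarith
  qed
  then show ?thesis by (rule that)
qed

lemma mu_le_measure:
  assumes e: "e > 0"
  obtains B where "\<And>n E. E \<in> sets N \<Longrightarrow> emeasure N E \<noteq> \<infinity> \<Longrightarrow> mu n E \<le> B * measure N E + e"
proof -
  obtain B0 where B0: "\<forall>B\<ge>B0. \<forall>F\<in>range f.
      (LINT x : {x \<in> space N. \<bar>F x\<bar> > B} | N. \<bar>F x\<bar>) \<le> e"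
    using semiuniformly_integrable_f e unfolding semiuniformly_integrable_def by blast
  define B where "B = max B0 0"
  have "mu n E \<le> B * measure N E + e" if E: "E \<in> sets N" "emeasure N E \<noteq> \<infinity>" for n E
  proof -
    define S where "S = {x \<in> space N. \<bar>f n x\<bar> > B}"
    have S: "S \<in> sets N" unfolding S_def by measurable
    have int_E: "integrable N (\<lambda>x. B * indicator E x)"
      using E by (simp add: less_top)
    have int_S: "integrable N (\<lambda>x. indicator S x * \<bar>f n x\<bar>)"
      using integrable_mult_indicator[of S N "\<lambda>x. \<bar>f n x\<bar>"] S integrable_f by auto
    \<comment> \<open>Outside \<open>S\<close> the integrand is at most \<open>B\<close>.\<close>
    have "mu n E \<le> (\<integral>x. B * indicator E x + indicator S x * \<bar>f n x\<bar> \<partial>N)"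
      unfolding mu_def
    proof (rule integral_mono)
      fix x assume "x \<in> space N"
      then show "indicator E x * f n x \<le> B * indicator E x + indicator S x * \<bar>f n x\<bar>"
        unfolding S_def B_def by (auto simp: indicator_def)
    qed (use int_E int_S integrable_indicator_f E in auto)
    also have "\<dots> = B * measure N E + (\<integral>x. indicator S x * \<bar>f n x\<bar> \<partial>N)"
      using int_E int_S E by (simp add: Int_absorb2 sets.sets_into_space)
    also have "\<dots> \<le> B * measure N E + e"
      using B0[rule_format, of B "f n"] unfolding S_def set_lebesgue_integral_def B_def by simp
    finally show ?thesis .
  qed
  then show ?thesis by (rule that)
qed

lemma mu_decseq_uniformly_small:
  assumes R: "\<And>k. R k \<in> sets N" "decseq R" "(\<Inter>k. R k) = {}" and e: "e > 0"
  obtains k0 where "\<And>k n. k \<ge> k0 \<Longrightarrow> mu n (R k) \<le> e"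
proof -
  obtain j where j: "\<And>n. mu n (space N - K j) \<le> e/3"
    using mu_uniformly_tight[of "e/3"] e by auto
  obtain B where B: "\<And>n E. E \<in> sets N \<Longrightarrow> emeasure N E \<noteq> \<infinity> \<Longrightarrow> mu n E \<le> B * measure N E + e/3"
    using mu_le_measure[of "e/3"] e by auto
  have fin: "emeasure N (R k \<inter> K j) \<noteq> \<infinity>" for k
    using finite_K[of j] emeasure_mono[of "R k \<inter> K j" "K j" N] K_sets by (auto simp: top_unique)
  have "(\<lambda>k. measure N (R k \<inter> K j)) \<longlonglongrightarrow> measure N (\<Inter>k. R k \<inter> K j)"
    using R K_sets fin by (intro Lim_measure_decseq) (auto simp: decseq_def)
  moreover have "(\<Inter>k. R k \<inter> K j) = {}" using R(3) by auto
  ultimately have "(\<lambda>k. B * measure N (R k \<inter> K j)) \<longlonglongrightarrow> 0"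
    using tendsto_mult_left[of _ 0 _ B] by simp
  then obtain k0 where k0: "\<And>k. k \<ge> k0 \<Longrightarrow> B * measure N (R k \<inter> K j) < e/3"
    using e unfolding lim_sequentially by (metis diff_zero divide_pos_pos norm_conv_dist real_norm_def
        zero_less_numeral abs_less_iff dist_real_def)
  have "mu n (R k) \<le> e" if "k \<ge> k0" for k n
  proof -
    have "mu n (R k) = mu n (R k \<inter> K j) + mu n (R k - K j)"
      using mu_Un[of "R k \<inter> K j" "R k - K j" n] R K_sets by (simp add: Int_Diff_Un Int_Diff_disjoint)
    moreover have "mu n (R k - K j) \<le> mu n (space N - K j)"
      using sets.sets_into_space[OF R(1)[of k]] R(1) K_sets by (intro mu_mono) auto
    ultimately show ?thesis using B[of "R k \<inter> K j" n] fin R K_sets j[of n] k0[OF that] by auto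
  qed
  then show ?thesis by (rule that)
qed

lemma mu_UN_uniform_limit:
  assumes A: "disjoint_family A" "\<And>i. A i \<in> sets N"
  shows "uniform_limit UNIV (\<lambda>k n. \<Sum>i<k. mu n (A i)) (\<lambda>n. mu n (\<Union>i. A i)) sequentially"
  unfolding uniform_limit_sequentially_iff
proof (intro allI impI)
  fix e :: real assume e: "e > 0"
  define R where "R k = (\<Union>i. A i) - (\<Union>i<k. A i)" for k
  have UN_sets: "(\<Union>i. A i) \<in> sets N" "(\<Union>i<k. A i) \<in> sets N" for k
    using A(2) by auto
  then have R_sets: "R k \<in> sets N" for k unfolding R_def by auto
  have "decseq R" unfolding R_def decseq_def by auto
  moreover have "(\<Inter>k. R k) = {}"
    unfolding R_def by (auto simp: lessThan_Suc_eq_insert_0 less_Suc_eq_le)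
  ultimately obtain k0 where k0: "\<And>k n. k \<ge> k0 \<Longrightarrow> mu n (R k) \<le> e/2"
    using mu_decseq_uniformly_small[of R "e/2"] R_sets e by auto
  have "dist (\<Sum>i<k. mu n (A i)) (mu n (\<Union>i. A i)) < e" if "k \<ge> k0" for k n
  proof -
    have "(\<Sum>i<k. mu n (A i)) = mu n (\<Union>i<k. A i)"
    proof (induction k)
      case (Suc k)
      have "(\<Union>i<Suc k. A i) = (\<Union>i<k. A i) \<union> A k" by (auto simp: lessThan_Suc)
      moreover have "(\<Union>i<k. A i) \<inter> A k = {}"
        using A(1) unfolding disjoint_family_on_def by (blast dest: less_imp_neq)
      ultimately show ?case using Suc mu_Un[of "\<Union>i<k. A i" "A k" n] UN_sets A(2) by simp
    qed simp
    moreover have "mu n (R k) = mu n (\<Union>i. A i) - mu n (\<Union>i<k. A i)"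
      unfolding R_def using UN_sets by (intro mu_Diff) auto
    ultimately show ?thesis using k0[OF that, of n] mu_nonneg[OF R_sets, of n k] e
      by (simp add: dist_real_def)
  qed
  then show "\<exists>k0. \<forall>k\<ge>k0. \<forall>n\<in>UNIV. dist (\<Sum>i<k. mu n (A i)) (mu n (\<Union>i. A i)) < e" by blast
qed

lemma convergent_mu:
  assumes "E \<in> sets N" shows "convergent (\<lambda>n. mu n E)"
proof (rule sigma_sets_induct_disjoint[OF Int_stable_G G_subset assms[unfolded sets_eq]])
  fix E assume "E \<in> G"
  then show "convergent (\<lambda>n. mu n E)"
    using uniformly_Cauchy_imp_Cauchy[OF mu_uniformly_Cauchy] Cauchy_convergent by blast
next
  show "convergent (\<lambda>n. mu n {})" by (simp add: convergent_const)
next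
  fix E assume E: "E \<in> sigma_sets (space N) G" and conv_E: "convergent (\<lambda>n. mu n E)"
  have "mu n (space N - E) = mu n (space N) - mu n E" for n
    using E sets.sets_into_space[of E N] sets_eq by (intro mu_Diff) auto
  moreover have "convergent (\<lambda>n. mu n (space N))"
    using uniformly_Cauchy_imp_Cauchy[OF mu_uniformly_Cauchy space_in_G] Cauchy_convergent by blast
  ultimately show "convergent (\<lambda>n. mu n (space N - E))" using conv_E by (simp add: convergent_diff)
next
  fix A :: "nat \<Rightarrow> 'a set"
  assume A: "disjoint_family A" "range A \<subseteq> sigma_sets (space N) G" "\<And>i. convergent (\<lambda>n. mu n (A i))"
  have A_sets: "A i \<in> sets N" for i using A(2) sets_eq by auto
  show "convergent (\<lambda>n. mu n (\<Union>i. A i))"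
    using convergent_uniform_limit(1)[OF mu_UN_uniform_limit[OF A(1) A_sets]] A(3)
    by (simp add: convergent_sum)
qed

definition nu :: "'a set \<Rightarrow> real" where
  "nu E = lim (\<lambda>n. mu n E)"

lemma mu_tendsto_nu: "E \<in> sets N \<Longrightarrow> (\<lambda>n. mu n E) \<longlonglongrightarrow> nu E"
  unfolding nu_def using convergent_mu convergent_LIMSEQ_iff by blast

lemma nu_nonneg: "E \<in> sets N \<Longrightarrow> 0 \<le> nu E"
  by (rule LIMSEQ_le_const[OF mu_tendsto_nu]) (auto intro: mu_nonneg)

lemma nu_null: "E \<in> null_sets N \<Longrightarrow> nu E = 0"
  using LIMSEQ_unique[OF mu_tendsto_nu] mu_null by (simp add: null_sets_def)

lemma nu_sums:
  assumes A: "disjoint_family A" "\<And>i. A i \<in> sets N"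
  shows "(\<lambda>i. nu (A i)) sums nu (\<Union>i. A i)"
proof -
  have "lim (\<lambda>n. \<Sum>i<k. mu n (A i)) = (\<Sum>i<k. nu (A i))" for k
    using A(2) by (intro limI tendsto_sum mu_tendsto_nu)
  then show ?thesis
    using convergent_uniform_limit(2)[OF mu_UN_uniform_limit[OF A]] A(2) convergent_mu
    unfolding sums_def nu_def[of "\<Union>i. A i"] by (simp add: convergent_sum)
qed

definition limit_measure :: "'a measure" where
  "limit_measure = measure_of (space N) (sets N) (\<lambda>E. ennreal (nu E))"

lemma sets_limit_measure[simp]: "sets limit_measure = sets N"
  unfolding limit_measure_def by (simp add: sets.space_closed)

lemma emeasure_limit_measure:
  assumes "E \<in> sets N" shows "emeasure limit_measure E = ennreal (nu E)"
  unfolding limit_measure_def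
proof (rule emeasure_measure_of_sigma[OF sets.sigma_algebra_axioms _ _ assms])
  show "positive (sets N) (\<lambda>E. ennreal (nu E))"
    by (simp add: positive_def nu_null)
  show "countably_additive (sets N) (\<lambda>E. ennreal (nu E))"
    unfolding countably_additive_def
  proof (intro allI impI)
    fix A :: "nat \<Rightarrow> 'a set" assume A: "range A \<subseteq> sets N" "disjoint_family A"
    then have sums: "(\<lambda>i. nu (A i)) sums nu (\<Union>i. A i)" using nu_sums by auto
    then have "(\<Sum>i. ennreal (nu (A i))) = ennreal (\<Sum>i. nu (A i))"
      using A by (intro suminf_ennreal2) (auto intro: nu_nonneg sums_summable)
    then show "(\<Sum>i. ennreal (nu (A i))) = ennreal (nu (\<Union> (range A)))"
      using sums_unique[OF sums] by simp
  qed
qed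

theorem limit_density:
  obtains g where "integrable N g" "\<And>x. 0 \<le> g x"
    "\<And>E. E \<in> sets N \<Longrightarrow> (\<lambda>n. LINT x:E|N. f n x) \<longlonglongrightarrow> (LINT x:E|N. g x)"
proof -
  have "sigma_finite_measure N"
    by (rule sigma_finite_measure.intro, rule exI[of _ "range K"]) (use K_sets UN_K finite_K in auto)
  moreover have "finite_measure limit_measure"
    using emeasure_limit_measure[of "space N"]
    by (intro finite_measureI) (simp add: sets_eq_imp_space_eq[OF sets_limit_measure])
  moreover have "absolutely_continuous N limit_measure"
    unfolding absolutely_continuous_def
    using emeasure_limit_measure nu_null by (auto simp: null_sets_def)
  ultimately obtain g where "integrable N g" "\<And>x. 0 \<le> g x"
    and g: "\<And>E. E \<in> sets N \<Longrightarrow> (LINT x:E|N. g x) = measure limit_measure E"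
    using sigma_finite_measure.real_Radon_Nikodym[of N limit_measure] by auto
  moreover have "(\<lambda>n. LINT x:E|N. f n x) \<longlonglongrightarrow> (LINT x:E|N. g x)" if "E \<in> sets N" for E
    using mu_tendsto_nu[OF that] g[OF that] emeasure_limit_measure[OF that] nu_nonneg[OF that]
    by (simp add: mu_def set_lebesgue_integral_def measure_def)
  ultimately show ?thesis using that by blast
qed

end

section \<open>Graphons\<close>

lemma set_integral_abs_le_integral_abs:
  fixes F :: "'a \<Rightarrow> real"
  assumes "integrable M F" "E \<in> sets M"
  shows "\<bar>LINT x:E|M. F x\<bar> \<le> (\<integral>x. \<bar>F x\<bar> \<partial>M)"
proof -
  have "\<bar>LINT x:E|M. F x\<bar> \<le> (\<integral>x. \<bar>indicator E x * F x\<bar> \<partial>M)"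
    unfolding set_lebesgue_integral_def using integral_abs_bound by simp
  also have "\<dots> \<le> (\<integral>x. \<bar>F x\<bar> \<partial>M)"
    using assms integrable_mult_indicator[of E M F]
    by (intro integral_mono) (auto simp: indicator_def)
  finally show ?thesis .
qed

lemma set_integral_le_cut_norm:
  assumes "integrable (M \<Otimes>\<^sub>M M) F" "T \<in> sets M" "U \<in> sets M"
  shows "\<bar>LINT z:T \<times> U|M \<Otimes>\<^sub>M M. F z\<bar> \<le> cut_norm M F"
  unfolding cut_norm_def
  using assms set_integral_abs_le_integral_abs[OF assms(1)]
  by (intro cSUP_upper2[where x="(T, U)"] bdd_aboveI2[where M="\<integral>z. \<bar>F z\<bar> \<partial>(M \<Otimes>\<^sub>M M)"]) auto

lemma cut_norm_le:
  assumes "\<And>T U. T \<in> sets M \<Longrightarrow> U \<in> sets M \<Longrightarrow> \<bar>LINT z:T \<times> U|M \<Otimes>\<^sub>M M. F z\<bar> \<le> e"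
  shows "cut_norm M F \<le> e"
  unfolding cut_norm_def using assms by (intro cSUP_least) auto

lemma uniformly_Cauchy_on_rectangles:
  assumes "cut_cauchy M W" "\<And>n. integrable (M \<Otimes>\<^sub>M M) (W n)"
  shows "uniformly_Cauchy_on {T \<times> U | T U. T \<in> sets M \<and> U \<in> sets M}
           (\<lambda>n E. LINT z:E|M \<Otimes>\<^sub>M M. W n z)"
proof (rule uniformly_Cauchy_onI)
  fix e :: real assume "e > 0"
  then obtain n0 where n0: "\<And>m n. m \<ge> n0 \<Longrightarrow> n \<ge> n0 \<Longrightarrow> cut_norm M (\<lambda>z. W m z - W n z) < e"
    using assms(1) unfolding cut_cauchy_def by blast
  have "dist (LINT z:T \<times> U|M \<Otimes>\<^sub>M M. W m z) (LINT z:T \<times> U|M \<Otimes>\<^sub>M M. W n z) < e"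
    if "T \<in> sets M" "U \<in> sets M" "m \<ge> n0" "n \<ge> n0" for T U m n
  proof -
    have "set_integrable (M \<Otimes>\<^sub>M M) (T \<times> U) (W k)" for k
      unfolding set_integrable_def using that assms(2) by (intro integrable_mult_indicator) auto
    then have "dist (LINT z:T \<times> U|M \<Otimes>\<^sub>M M. W m z) (LINT z:T \<times> U|M \<Otimes>\<^sub>M M. W n z)
        = \<bar>LINT z:T \<times> U|M \<Otimes>\<^sub>M M. W m z - W n z\<bar>"
      by (simp add: dist_real_def)
    also have "\<dots> \<le> cut_norm M (\<lambda>z. W m z - W n z)"
      using that assms(2) by (intro set_integral_le_cut_norm) auto
    finally show ?thesis using n0[OF that(3,4)] by linarith
  qed
  then show "\<exists>n0. \<forall>E\<in>{T \<times> U | T U. T \<in> sets M \<and> U \<in> sets M}. \<forall>m\<ge>n0. \<forall>n\<ge>n0.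
      dist (LINT z:E|M \<Otimes>\<^sub>M M. W m z) (LINT z:E|M \<Otimes>\<^sub>M M. W n z) < e"
    by blast
qed

lemma tendsto_cut_norm_zero:
  assumes cauchy: "cut_cauchy M W" and W: "\<And>n. integrable (M \<Otimes>\<^sub>M M) (W n)"
    and V: "integrable (M \<Otimes>\<^sub>M M) V"
    and lim: "\<And>T U. T \<in> sets M \<Longrightarrow> U \<in> sets M \<Longrightarrow>
      (\<lambda>n. LINT z:T \<times> U|M \<Otimes>\<^sub>M M. W n z) \<longlonglongrightarrow> (LINT z:T \<times> U|M \<Otimes>\<^sub>M M. V z)"
  shows "(\<lambda>n. cut_norm M (\<lambda>z. W n z - V z)) \<longlonglongrightarrow> 0"
proof (rule LIMSEQ_I)
  fix e :: real assume e: "e > 0"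
  obtain n0 where n0: "\<And>m n E. E \<in> {T \<times> U | T U. T \<in> sets M \<and> U \<in> sets M} \<Longrightarrow> m \<ge> n0 \<Longrightarrow> n \<ge> n0 \<Longrightarrow>
      dist (LINT z:E|M \<Otimes>\<^sub>M M. W m z) (LINT z:E|M \<Otimes>\<^sub>M M. W n z) < e/2"
    using uniformly_Cauchy_on_rectangles[OF cauchy W] e unfolding uniformly_Cauchy_on_def
    by (meson half_gt_zero)
  have "norm (cut_norm M (\<lambda>z. W n z - V z) - 0) < e" if "n \<ge> n0" for n
  proof -
    have "cut_norm M (\<lambda>z. W n z - V z) \<le> e/2"
    proof (rule cut_norm_le)
      fix T U assume TU: "T \<in> sets M" "U \<in> sets M"
      have "(\<lambda>m. dist (LINT z:T \<times> U|M \<Otimes>\<^sub>M M. W n z) (LINT z:T \<times> U|M \<Otimes>\<^sub>M M. W m z))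
          \<longlonglongrightarrow> dist (LINT z:T \<times> U|M \<Otimes>\<^sub>M M. W n z) (LINT z:T \<times> U|M \<Otimes>\<^sub>M M. V z)"
        using lim[OF TU] by (intro tendsto_intros)
      then have "dist (LINT z:T \<times> U|M \<Otimes>\<^sub>M M. W n z) (LINT z:T \<times> U|M \<Otimes>\<^sub>M M. V z) \<le> e/2"
        by (rule LIMSEQ_le_const2) (use n0[of "T \<times> U"] TU that in \<open>auto intro!: exI[of _ n0] less_imp_le\<close>)
      moreover have "set_integrable (M \<Otimes>\<^sub>M M) (T \<times> U) F" if "integrable (M \<Otimes>\<^sub>M M) F" for F :: "_ \<Rightarrow> real"
        unfolding set_integrable_def using that TU by (intro integrable_mult_indicator) auto
      ultimately show "\<bar>LINT z:T \<times> U|M \<Otimes>\<^sub>M M. W n z - V z\<bar> \<le> e/2"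
        using W V by (simp add: dist_real_def)
    qed
    moreover have "0 \<le> cut_norm M (\<lambda>z. W n z - V z)"
      using set_integral_le_cut_norm[of M "\<lambda>z. W n z - V z" "{}" "{}"] W V by auto
    ultimately show ?thesis using e by simp
  qed
  then show "\<exists>n0. \<forall>n\<ge>n0. norm (cut_norm M (\<lambda>z. W n z - V z) - 0) < e" by blast
qed

lemma (in pair_sigma_finite) set_integral_product_swap:
  fixes F :: "_ \<Rightarrow> real"
  assumes "F \<in> borel_measurable (M1 \<Otimes>\<^sub>M M2)" "T \<in> sets M2" "U \<in> sets M1"
  shows "(LINT z:T \<times> U|M2 \<Otimes>\<^sub>M M1. F (snd z, fst z)) = (LINT z:U \<times> T|M1 \<Otimes>\<^sub>M M2. F z)"
proof -
  have "(LINT z:T \<times> U|M2 \<Otimes>\<^sub>M M1. F (snd z, fst z))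
      = (\<integral>(x, y). indicator (U \<times> T) (y, x) * F (y, x) \<partial>(M2 \<Otimes>\<^sub>M M1))"
    unfolding set_lebesgue_integral_def
    by (intro Bochner_Integration.integral_cong) (auto simp: indicator_def)
  also have "\<dots> = (LINT z:U \<times> T|M1 \<Otimes>\<^sub>M M2. F z)"
    unfolding set_lebesgue_integral_def using assms by (subst integral_product_swap) auto
  finally show ?thesis .
qed

lemma graphon_set_integral_swap:
  assumes M: "sigma_finite_measure M" and W: "graphon M W" and TU: "T \<in> sets M" "U \<in> sets M"
  shows "(LINT z:U \<times> T|M \<Otimes>\<^sub>M M. W z) = (LINT z:T \<times> U|M \<Otimes>\<^sub>M M. W z)"
proof -
  interpret pair_sigma_finite M M
    using M by (simp add: pair_sigma_finite_def)
  have W_measurable[measurable]: "W \<in> borel_measurable (M \<Otimes>\<^sub>M M)"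
    using W by (auto simp: graphon_def)
  have "(LINT z:T \<times> U|M \<Otimes>\<^sub>M M. W z) = (LINT z:T \<times> U|M \<Otimes>\<^sub>M M. W (snd z, fst z))"
    unfolding set_lebesgue_integral_def
  proof (rule integral_cong_AE)
    show "AE z in M \<Otimes>\<^sub>M M. indicator (T \<times> U) z *\<^sub>R W z = indicator (T \<times> U) z *\<^sub>R W (snd z, fst z)"
      using W by (auto simp: graphon_def elim: AE_mp)
  qed (use TU in measurable)
  also have "\<dots> = (LINT z:U \<times> T|M \<Otimes>\<^sub>M M. W z)"
    using TU by (intro set_integral_product_swap) auto
  finally show ?thesis ..
qed

lemma graphon_symmetrization:
  assumes M: "sigma_finite_measure M" and g: "integrable (M \<Otimes>\<^sub>M M) g"
  shows "graphon M (\<lambda>z. (g z + g (snd z, fst z)) / 2)"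
proof -
  interpret pair_sigma_finite M M
    using M by (simp add: pair_sigma_finite_def)
  have "integrable (M \<Otimes>\<^sub>M M) (\<lambda>z. g (snd z, fst z))"
    using integrable_product_swap[OF g] by (simp add: case_prod_beta')
  then show ?thesis
    using g unfolding graphon_def by auto
qed

lemma incseq_Times_UN:
  assumes "incseq A" shows "(\<Union>j. A j \<times> A j) = (\<Union>j. A j) \<times> (\<Union>j. A j)"
proof (intro equalityI subsetI)
  fix z assume "z \<in> (\<Union>j. A j) \<times> (\<Union>j. A j)"
  then obtain i j where "fst z \<in> A i" "snd z \<in> A j" by auto
  then have "z \<in> A (max i j) \<times> A (max i j)"
    using monoD[OF assms, of i "max i j"] monoD[OF assms, of j "max i j"] by (auto simp: mem_Times_iff)
  then show "z \<in> (\<Union>j. A j \<times> A j)" by blast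
qed auto

lemma cut_cauchy_graphons_setwise_limit:
  assumes M: "sigma_finite_measure M"
    and W: "\<And>n. graphon M (W n)" "\<And>n. AE z in M \<Otimes>\<^sub>M M. 0 \<le> W n z"
    and ui: "semiuniformly_integrable (M \<Otimes>\<^sub>M M) (range W)" and cauchy: "cut_cauchy M W"
  obtains g where "integrable (M \<Otimes>\<^sub>M M) g" "\<And>E. E \<in> sets (M \<Otimes>\<^sub>M M) \<Longrightarrow>
      (\<lambda>n. LINT z:E|M \<Otimes>\<^sub>M M. W n z) \<longlonglongrightarrow> (LINT z:E|M \<Otimes>\<^sub>M M. g z)"
proof -
  obtain A where A: "range A \<subseteq> sets M" "(\<Union>j. A j) = space M" "\<And>j. emeasure M (A j) \<noteq> \<infinity>" "incseq A"
    using sigma_finite_measure.sigma_finite_incseq[OF M] by metis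
  have W_integrable: "integrable (M \<Otimes>\<^sub>M M) (W n)" for n
    using W(1) by (simp add: graphon_def)
  interpret uniformly_cauchy_densities "M \<Otimes>\<^sub>M M" "{T \<times> U | T U. T \<in> sets M \<and> U \<in> sets M}"
    "\<lambda>j. A j \<times> A j" W
  proof
    show "{T \<times> U | T U. T \<in> sets M \<and> U \<in> sets M} \<subseteq> Pow (space (M \<Otimes>\<^sub>M M))"
      using sets.sets_into_space by (fastforce simp: space_pair_measure)
    show "sets (M \<Otimes>\<^sub>M M) = sigma_sets (space (M \<Otimes>\<^sub>M M)) {T \<times> U | T U. T \<in> sets M \<and> U \<in> sets M}"
      by (simp add: sets_pair_measure space_pair_measure)
    show "space (M \<Otimes>\<^sub>M M) \<in> {T \<times> U | T U. T \<in> sets M \<and> U \<in> sets M}"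
      by (auto simp: space_pair_measure)
    show "A j \<times> A j \<in> {T \<times> U | T U. T \<in> sets M \<and> U \<in> sets M}" for j
      using A(1) by blast
    show "incseq (\<lambda>j. A j \<times> A j)"
      using A(4) by (auto simp: incseq_def)
    show "(\<Union>j. A j \<times> A j) = space (M \<Otimes>\<^sub>M M)"
      using incseq_Times_UN[OF A(4)] A(2) by (simp add: space_pair_measure)
    show "emeasure (M \<Otimes>\<^sub>M M) (A j \<times> A j) \<noteq> \<infinity>" for j
      using A(1,3) sigma_finite_measure.emeasure_pair_measure_Times[OF M, of "A j" M "A j"]
      by (auto simp: ennreal_mult_eq_top_iff)
  qed (use W W_integrable ui uniformly_Cauchy_on_rectangles[OF cauchy W_integrable]
        Int_stable_pair_measure_generator in auto)
  show ?thesis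
    using limit_density that by metis
qed

lemma cut_cauchy_rectangle_limit:
  assumes M: "sigma_finite_measure M"
    and W: "\<And>n. graphon M (W n)" "\<And>n. AE z in M \<Otimes>\<^sub>M M. 0 \<le> W n z"
    and ui: "semiuniformly_integrable (M \<Otimes>\<^sub>M M) (range W)" and cauchy: "cut_cauchy M W"
  obtains V where "graphon M V" "\<And>T U. T \<in> sets M \<Longrightarrow> U \<in> sets M \<Longrightarrow>
      (\<lambda>n. LINT z:T \<times> U|M \<Otimes>\<^sub>M M. W n z) \<longlonglongrightarrow> (LINT z:T \<times> U|M \<Otimes>\<^sub>M M. V z)"
proof -
  interpret pair_sigma_finite M M
    using M by (simp add: pair_sigma_finite_def)
  obtain g where g: "integrable (M \<Otimes>\<^sub>M M) g"
    and g_lim: "\<And>E. E \<in> sets (M \<Otimes>\<^sub>M M) \<Longrightarrow> (\<lambda>n. LINT z:E|M \<Otimes>\<^sub>M M. W n z) \<longlonglongrightarrow> (LINT z:E|M \<Otimes>\<^sub>M M. g z)"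
    using cut_cauchy_graphons_setwise_limit[OF assms] by metis
  define V where "V z = (g z + g (snd z, fst z)) / 2" for z
  have "(\<lambda>n. LINT z:T \<times> U|M \<Otimes>\<^sub>M M. W n z) \<longlonglongrightarrow> (LINT z:T \<times> U|M \<Otimes>\<^sub>M M. V z)"
    if TU: "T \<in> sets M" "U \<in> sets M" for T U
  proof -
    have "set_integrable (M \<Otimes>\<^sub>M M) (T \<times> U) F" if "integrable (M \<Otimes>\<^sub>M M) F" for F :: "_ \<Rightarrow> real"
      unfolding set_integrable_def using that TU by (intro integrable_mult_indicator) auto
    then have "(LINT z:T \<times> U|M \<Otimes>\<^sub>M M. V z)
        = ((LINT z:T \<times> U|M \<Otimes>\<^sub>M M. g z) + (LINT z:T \<times> U|M \<Otimes>\<^sub>M M. g (snd z, fst z))) / 2"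
      using g integrable_product_swap[OF g] unfolding V_def by (simp add: case_prod_beta')
    also have "\<dots> = ((LINT z:T \<times> U|M \<Otimes>\<^sub>M M. g z) + (LINT z:U \<times> T|M \<Otimes>\<^sub>M M. g z)) / 2"
      using TU g by (subst set_integral_product_swap) auto
    finally have V_eq: "(LINT z:T \<times> U|M \<Otimes>\<^sub>M M. V z) = \<dots>" .
    \<comment> \<open>The rectangle integrals of each \<open>W n\<close> are symmetric.\<close>
    have "(\<lambda>n. ((LINT z:T \<times> U|M \<Otimes>\<^sub>M M. W n z) + (LINT z:U \<times> T|M \<Otimes>\<^sub>M M. W n z)) / 2)
        \<longlonglongrightarrow> ((LINT z:T \<times> U|M \<Otimes>\<^sub>M M. g z) + (LINT z:U \<times> T|M \<Otimes>\<^sub>M M. g z)) / 2"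
      using TU by (intro tendsto_intros g_lim) auto
    then show ?thesis
      unfolding V_eq graphon_set_integral_swap[OF M W(1) TU] by simp
  qed
  then show ?thesis
    using that graphon_symmetrization[OF M g] unfolding V_def by blast
qed

theorem mainTheorem8:
  fixes M :: "'a measure" and A :: "('a \<times> 'a \<Rightarrow> real) set"
  assumes "sigma_finite_measure M"
    and "\<forall>W\<in>A. graphon M W \<and> (AE z in M \<Otimes>\<^sub>M M. W z \<ge> 0)"
    and "semiuniformly_integrable (M \<Otimes>\<^sub>M M) A"
  shows "\<forall>W :: nat \<Rightarrow> 'a \<times> 'a \<Rightarrow> real. (\<forall>n. W n \<in> A) \<and> cut_cauchy M W \<longrightarrow>
           (\<exists>V. graphon M V \<and> (\<lambda>n. cut_norm M (\<lambda>z. W n z - V z)) \<longlonglongrightarrow> 0)"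
proof (intro allI impI)
  fix W :: "nat \<Rightarrow> 'a \<times> 'a \<Rightarrow> real"
  assume W: "(\<forall>n. W n \<in> A) \<and> cut_cauchy M W"
  then have "semiuniformly_integrable (M \<Otimes>\<^sub>M M) (range W)"
    using assms(3) unfolding semiuniformly_integrable_def by blast
  then obtain V where V: "graphon M V" and lim: "\<And>T U. T \<in> sets M \<Longrightarrow> U \<in> sets M \<Longrightarrow>
      (\<lambda>n. LINT z:T \<times> U|M \<Otimes>\<^sub>M M. W n z) \<longlonglongrightarrow> (LINT z:T \<times> U|M \<Otimes>\<^sub>M M. V z)"
    using cut_cauchy_rectangle_limit[OF assms(1), of W] W assms(2) by blast
  have "(\<lambda>n. cut_norm M (\<lambda>z. W n z - V z)) \<longlonglongrightarrow> 0"
    using W assms(2) V lim by (intro tendsto_cut_norm_zero) (auto simp: graphon_def)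
  then show "\<exists>V. graphon M V \<and> (\<lambda>n. cut_norm M (\<lambda>z. W n z - V z)) \<longlonglongrightarrow> 0"
    using V by blast
qed

end
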